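(* Let $q$ be a prime power, let $m,n\ge1$ with $\gcd(n,q^m-1)=1$. Let $l(x)=\sum_{v=0}^{m} b_v x^{q^v}\in\mathbb{F}_q[x]$ be such that its conventional $q$-associate $\bar l(x)=\sum_{v=0}^m b_v x^v$ is a primitive polynomial of degree $m$ over $\mathbb{F}_q$ with $\bar l(x)\neq x-1$. Let $f(x)$ be a monic irreducible polynomial of degree $n$ over $\mathbb{F}_q$. Let $R(x)$ be the remainder of $l(x)$ modulo $f(x)$, and let $\psi(x)=\sum_{u=0}^n\psi_u x^u\in\mathbb{F}_q[x]$ be the monic nonzero polynomial of least degree satisfying $$\sum_{u=0}^{n}\psi_u\,(R(x))^u\equiv 0\pmod{f(x)}.$$ Then $\psi(x)$ is an irreducible polynomial of degree $n$ over $\mathbb{F}_q$, and $F(x)=\psi(l(x))/f(x)$ is an irreducible polynomial of degree $n(q^m-1)$ over $\mathbb{F}_q$.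
   Context: A primitive polynomial of degree $m$ over $\mathbb{F}_q$ is a monic irreducible polynomial of degree $m$ whose roots are generators of the multiplicative group $\mathbb{F}_{q^m}^*$. *)

theory Defs
  imports "HOL-Computational_Algebra.Computational_Algebra" "HOL-Library.Cardinality"
begin

text \<open>A primitive polynomial of degree m: monic, irreducible, degree m, and its root
  (the class of x in 'a[x]/(p), a copy of F_{q^m}) generates the multiplicative
  group of F_{q^m}, i.e. x has multiplicative order q^m - 1 modulo p.\<close>

definition primitive_poly :: "nat \<Rightarrow> ('a::{finite,field}) poly \<Rightarrow> bool" where
  "primitive_poly m (p :: 'a poly) \<longleftrightarrow>
     lead_coeff p = 1 \<and> irreducible p \<and> degree p = m \<and>
     p dvd ([:0,1:] ^ (CARD('a) ^ m - 1) - 1) \<and>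
     (\<forall>k. 0 < k \<and> k < CARD('a) ^ m - 1 \<longrightarrow> \<not> p dvd ([:0,1:] ^ k - 1))"

definition lin_assoc :: "'a::{finite,field} poly \<Rightarrow> 'a poly" where
  "lin_assoc (p :: 'a poly) = (\<Sum>v\<le>degree p. monom (coeff p v) (CARD('a) ^ v))"

end

theory Submission
  imports Defs "HOL-Number_Theory.Cong" "HOL-Algebra.Sylow"
begin

(* Write q = CARD('a) and L(p) = lin_assoc p.  Two facts drive the proof.
   (1) Fermat modulo an irreducible P of degree d: h^(q^d) = h (mod P) for every h.
       From it: q is a power of the characteristic, so u |-> u^q is additive on
       polynomials; an irreducible P divides X^(q^k) - X only if deg P divides k; and
       an irreducible factor P of g(u), g irreducible, has deg g dividing deg P.
   (2) L turns products into compositions, L(g*h) = L(g) o L(h).  Hence linearized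
       polynomials commute under composition, X^(q^k) - X = L(X^k - 1) commutes with
       l = L(lbar), and a Bezout relation s*lbar + t*(X^k - 1) = 1 yields the kernel
       lemma: l(y) = 0 and y^(q^k) = y modulo Q force y = 0 modulo Q.
   The locale linearized_annihilator collects the situation of the theorem (psi is
   the minimal annihilator of l modulo f, gcd(lbar, X^n - 1) = 1).  There psi is
   irreducible of degree n, f^2 does not divide psi(l), and every other irreducible
   factor of psi(l) has degree divisible by n and by the order q^m - 1 of lbar, so
   psi(l)/f, of degree n(q^m - 1), is irreducible. *)

abbreviation (input) pX :: "'a::comm_ring_1 poly" where "pX \<equiv> [:0, 1:]"

lemma card_finite_field_ge_2: "CARD('a::{finite,field}) \<ge> 2"
  using card_mono[of UNIV "{0, 1 :: 'a}"] by simp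

lemma card_power_ge_2: "k > 0 \<Longrightarrow> CARD('a::{finite,field}) ^ k \<ge> 2"
  using card_finite_field_ge_2[where 'a='a] power_increasing[of 1 k "CARD('a)"] by simp

lemma card_degree_less:
  assumes "d > 0"
  shows "card {h :: 'a::{finite,field} poly. degree h < d} = CARD('a) ^ d"
    and "finite {h :: 'a::{finite,field} poly. degree h < d}"
proof -
  define F where "F = (\<lambda>c. \<Sum>i<d. monom (c i) i :: 'a poly)"
  have coeff_F: "coeff (F c) j = (if j < d then c j else 0)" for c j
    unfolding F_def by (simp add: coeff_sum coeff_monom)
  have inj: "inj_on F (PiE {..<d} (\<lambda>_. UNIV))"
  proof (rule inj_onI, rule ext)
    fix c c' i
    assume c: "c \<in> PiE {..<d} (\<lambda>_. UNIV)" "c' \<in> PiE {..<d} (\<lambda>_. UNIV)" "F c = F c'"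
    show "c i = c' i"
      using arg_cong[OF c(3), of "\<lambda>p. coeff p i"] c(1,2)
      by (cases "i < d") (auto simp: coeff_F PiE_def extensional_def)
  qed
  have image: "F ` PiE {..<d} (\<lambda>_. UNIV) = {h. degree h < d}"
  proof (intro equalityI subsetI)
    fix h assume "h \<in> F ` PiE {..<d} (\<lambda>_. UNIV)"
    then obtain c where "h = F c" by auto
    hence "degree h \<le> d - 1"
      by (intro degree_le) (use assms in \<open>auto simp: coeff_F\<close>)
    thus "h \<in> {h. degree h < d}" using assms by simp
  next
    fix h :: "'a poly" assume "h \<in> {h. degree h < d}"
    hence "h = F (restrict (coeff h) {..<d})"
      by (intro poly_eqI) (auto simp: coeff_F coeff_eq_0)
    thus "h \<in> F ` PiE {..<d} (\<lambda>_. UNIV)" by auto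
  qed
  show "card {h :: 'a poly. degree h < d} = CARD('a) ^ d"
    unfolding image[symmetric] by (subst card_image[OF inj]) (simp add: card_PiE)
  show "finite {h :: 'a poly. degree h < d}"
    unfolding image[symmetric] by (intro finite_imageI finite_PiE) auto
qed

lemma dvd_degree_less_imp_zero:
  fixes P h :: "'a::field poly"
  assumes "P dvd h" "degree h < degree P"
  shows "h = 0"
  using assms dvd_imp_degree_le by force

lemma irreducible_degree_pos:
  fixes P :: "'a::field poly"
  assumes "irreducible P"
  shows "degree P > 0"
  using assms is_unit_iff_degree[of P] by (auto simp: irreducible_def)

lemma prime_elem_not_dvd_prod:
  assumes "prime_elem p" "finite A" "\<And>x. x \<in> A \<Longrightarrow> \<not> p dvd f x"
  shows "\<not> p dvd prod f A"
  using assms(2,3)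
  by (induction A rule: finite_induct)
     (auto simp: prime_elem_dvd_mult_iff[OF assms(1)] prime_elem_not_unit[OF assms(1)])

(* Fermat's little theorem in F[X]/(P): multiplication by h, P not dividing h, permutes
   the q^d - 1 nonzero residues, so comparing products gives h^(q^d - 1) = 1 (mod P). *)
lemma fermat_mod_irreducible:
  fixes P h :: "'a::{finite,field} poly"
  assumes irr: "irreducible P"
  shows "[h ^ (CARD('a) ^ degree P) = h] (mod P)"
proof (cases "P dvd h")
  case True
  moreover have "h dvd h ^ (CARD('a) ^ degree P)"
    by (simp add: dvd_power)
  ultimately show ?thesis
    by (simp add: cong_iff_dvd_diff dvd_diff dvd_trans)
next
  case False
  define d where "d = degree P"
  define S where "S = {g :: 'a poly. degree g < d} - {0}"
  have d: "d > 0" unfolding d_def using irr by (rule irreducible_degree_pos)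
  have P: "prime_elem P" using irr by (rule field_poly_irreducible_imp_prime)
  have finite_S: "finite S" unfolding S_def using card_degree_less(2)[OF d, where 'a='a] by simp
  have card_S: "Suc (card S) = CARD('a) ^ d"
    unfolding S_def using card_degree_less[OF d, where 'a='a] d by (subst card_Diff_singleton) auto
  have not_dvd: "\<not> P dvd g" if "g \<in> S" for g
    using that dvd_degree_less_imp_zero[of P g] unfolding S_def d_def by auto
  have small: "g = g'" if "g \<in> S" "g' \<in> S" "P dvd g - g'" for g g'
    using that dvd_degree_less_imp_zero[of P "g - g'"] degree_diff_le_max[of g g']
    unfolding S_def d_def by auto
  define phi where "phi g = (h * g) mod P" for g
  have inj: "inj_on phi S"
  proof (rule inj_onI)
    fix g g' assume "g \<in> S" "g' \<in> S" "phi g = phi g'"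
    hence "P dvd h * (g - g')" by (simp add: phi_def mod_eq_dvd_iff right_diff_distrib)
    thus "g = g'"
      using False P \<open>g \<in> S\<close> \<open>g' \<in> S\<close> small by (simp add: prime_elem_dvd_mult_iff)
  qed
  have "phi ` S \<subseteq> S"
    using False not_dvd P d unfolding S_def d_def phi_def
    by (auto simp: prime_elem_dvd_mult_iff mod_eq_0_iff_dvd degree_mod_less')
  hence perm: "phi ` S = S" by (rule endo_inj_surj[OF finite_S _ inj])
  have "[h ^ card S * \<Prod>S = \<Prod>S] (mod P)"
  proof -
    have "h ^ card S * \<Prod>S = (\<Prod>g\<in>S. h * g)" by (simp add: prod.distrib)
    also have "[\<dots> = (\<Prod>g\<in>S. phi g)] (mod P)" unfolding phi_def by (rule cong_prod) simp
    also have "(\<Prod>g\<in>S. phi g) = \<Prod>S" using prod.reindex[OF inj, of id] perm by simp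
    finally show ?thesis .
  qed
  hence "P dvd (h ^ card S - 1) * \<Prod>S" by (simp add: cong_iff_dvd_diff left_diff_distrib)
  moreover have "\<not> P dvd \<Prod>S"
    by (rule prime_elem_not_dvd_prod[OF P finite_S not_dvd])
  ultimately have "P dvd h ^ card S - 1" using P by (simp add: prime_elem_dvd_mult_iff)
  hence "P dvd h * (h ^ card S - 1)" by (rule dvd_mult)
  moreover have "h * (h ^ card S - 1) = h ^ (CARD('a) ^ d) - h"
    using card_S by (metis power_Suc right_diff_distrib mult_1_right)
  ultimately show ?thesis by (simp add: cong_iff_dvd_diff d_def)
qed

lemma fermat_mod_irreducible_iterate:
  fixes P h :: "'a::{finite,field} poly"
  assumes "irreducible P"
  shows "[h ^ (CARD('a) ^ (degree P * i)) = h] (mod P)"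
proof (induction i)
  case (Suc i)
  have "h ^ (CARD('a) ^ (degree P * Suc i)) = (h ^ (CARD('a) ^ (degree P * i))) ^ (CARD('a) ^ degree P)"
    by (simp add: power_add power_mult[symmetric] mult.commute)
  also have "[\<dots> = h ^ (CARD('a) ^ (degree P * i))] (mod P)"
    by (rule fermat_mod_irreducible[OF assms])
  also note Suc.IH
  finally show ?case .
qed simp

(* Inverses modulo an irreducible P come from Fermat: h * h^(q^d - 2) = 1 (mod P). *)
lemma bezout_mod_irreducible:
  fixes P h :: "'a::{finite,field} poly"
  assumes irr: "irreducible P" and not_dvd: "\<not> P dvd h"
  obtains s t where "s * P + t * h = 1"
proof -
  define Q where "Q = CARD('a) ^ degree P"
  have Q: "Q \<ge> 2" unfolding Q_def using irreducible_degree_pos[OF irr] by (rule card_power_ge_2)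
  have "P dvd h ^ Q - h"
    using fermat_mod_irreducible[OF irr, of h] by (simp add: Q_def cong_iff_dvd_diff)
  also have "h ^ Q - h = h * (h ^ (Q - 2) * h - 1)"
  proof -
    have "Q = Suc (Suc (Q - 2))" using Q by simp
    hence "h ^ Q = h * (h ^ (Q - 2) * h)" by (metis power_Suc power_Suc2)
    thus ?thesis by (simp add: right_diff_distrib)
  qed
  finally have "P dvd h ^ (Q - 2) * h - 1"
    using not_dvd irr by (simp add: prime_elem_dvd_mult_iff field_poly_irreducible_imp_prime)
  then obtain c where "h ^ (Q - 2) * h - 1 = P * c" by (elim dvdE)
  hence "(- c) * P + h ^ (Q - 2) * h = 1" by (simp add: algebra_simps)
  thus ?thesis by (rule that)
qed

(* Fermat modulo the irreducible polynomial X, applied to the constant c. *)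
lemma finite_field_power_card:
  fixes c :: "'a::{finite,field}"
  shows "c ^ CARD('a) = c"
proof -
  have "irreducible (pX :: 'a poly)" by (simp add: irreducible_linear_field_poly)
  hence "[[:c:] ^ (CARD('a) ^ 1) = [:c:]] (mod pX)"
    using fermat_mod_irreducible[of pX "[:c:]"] by simp
  hence "pX dvd [:c ^ CARD('a) - c:]" by (simp add: cong_iff_dvd_diff poly_const_pow)
  thus ?thesis by (simp add: dvd_iff_poly_eq_0)
qed

lemma finite_field_power_card_power:
  fixes c :: "'a::{finite,field}"
  shows "c ^ (CARD('a) ^ j) = c"
  by (induction j) (simp_all add: finite_field_power_card power_mult flip: power_mult_distrib)

lemma prime_CHAR_finite_field: "prime CHAR('a::{finite,field})"
  by (intro prime_CHAR_semidom finite_imp_CHAR_pos) simp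

(* Cauchy's theorem for the additive group: a Sylow subgroup H of prime order r is closed
   under translation by any of its elements h, so summing over H gives r * h = 0; taking
   h nonzero shows that r vanishes in F, i.e. r is the characteristic. *)
lemma prime_dvd_card_eq_CHAR:
  assumes r: "prime r" and r_dvd: "r dvd CARD('a::{finite,field})"
  shows "r = CHAR('a)"
proof -
  define G where "G = \<lparr>carrier = (UNIV :: 'a set), monoid.mult = (+), one = (0 :: 'a)\<rparr>"
  have "group G"
  proof (rule groupI)
    fix x assume "x \<in> carrier G"
    show "\<exists>y\<in>carrier G. y \<otimes>\<^bsub>G\<^esub> x = \<one>\<^bsub>G\<^esub>"
      by (intro bexI[of _ "- x"]) (auto simp: G_def)
  qed (auto simp: G_def add_ac)
  moreover have "order G = r ^ 1 * (CARD('a) div r)"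
    using r_dvd by (simp add: order_def G_def)
  ultimately obtain H where H: "subgroup H G" "card H = r"
    using sylow_thm[OF r] by fastforce
  have add_closed: "g + h \<in> H" if "g \<in> H" "h \<in> H" for g h
    using subgroup.m_closed[OF H(1) that] by (simp add: G_def)
  have "\<not> H \<subseteq> {0}"
    using card_mono[of "{0}" H] H(2) prime_gt_1_nat[OF r] by auto
  then obtain h where h: "h \<in> H" "h \<noteq> 0" by auto
  have "inj_on (\<lambda>g. g + h) H" by (rule inj_onI) simp
  moreover have "(\<lambda>g. g + h) ` H = H"
    using add_closed h(1) by (intro endo_inj_surj) (auto intro: inj_onI)
  ultimately have "(\<Sum>g\<in>H. g + h) = (\<Sum>g\<in>H. g)"
    using sum.reindex[of "\<lambda>g. g + h" H id] by simp
  hence "of_nat r * h = 0" using H(2) by (simp add: sum.distrib)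
  hence "CHAR('a) dvd r" using h(2) by (simp add: of_nat_eq_0_iff_char_dvd)
  thus ?thesis using r prime_CHAR_finite_field[where 'a='a] by (auto simp: prime_nat_iff)
qed

lemma eq_prime_power_if_prime_divisors:
  fixes n p :: nat
  assumes "n > 0" "\<And>r. prime r \<Longrightarrow> r dvd n \<Longrightarrow> r = p"
  shows "\<exists>k. n = p ^ k"
  using assms
proof (induction n rule: less_induct)
  case (less n)
  show ?case
  proof (cases "n = 1")
    case False
    then obtain r where r: "prime r" "r dvd n" using prime_factor_nat by blast
    then obtain n' where n: "n = p * n'" using less.prems(2) by (auto elim: dvdE)
    moreover have p: "prime p" using r less.prems(2) by blast
    ultimately have "n' < n" "n' > 0" using less.prems(1) prime_gt_1_nat[OF p] by auto
    then obtain k where "n' = p ^ k" using less.IH less.prems(2) n by fastforce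
    thus ?thesis using n by (auto intro: exI[of _ "Suc k"])
  qed (auto intro: exI[of _ 0])
qed

lemma card_eq_CHAR_power: "\<exists>k>0. CARD('a::{finite,field}) = CHAR('a) ^ k"
proof -
  obtain k where k: "CARD('a) = CHAR('a) ^ k"
    using eq_prime_power_if_prime_divisors[of "CARD('a)" "CHAR('a)"] prime_dvd_card_eq_CHAR by auto
  moreover have "CARD('a) \<noteq> 1" using card_finite_field_ge_2[where 'a='a] by simp
  ultimately show ?thesis by (intro exI[of _ k]) (auto intro: gr0I)
qed

(* q vanishes in F; this kills the derivative of q-th powers. *)
lemma of_nat_card_eq_0: "of_nat CARD('a::{finite,field}) = (0 :: 'a)"
  using card_eq_CHAR_power[where 'a='a] by (auto simp: of_nat_power power_0_left)

(* The freshman's dream for the exponent q^j, which is a power of the characteristic. *)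
lemma frobenius_add:
  fixes a b :: "'a::{finite,field} poly"
  shows "(a + b) ^ (CARD('a) ^ j) = a ^ (CARD('a) ^ j) + b ^ (CARD('a) ^ j)"
proof -
  obtain k where "CARD('a) = CHAR('a) ^ k" using card_eq_CHAR_power by blast
  thus ?thesis
    by (intro freshmans_dream') (simp_all add: prime_CHAR_finite_field power_mult[symmetric])
qed

lemma pcompose_X: "pcompose pX u = (u :: 'a::comm_ring_1 poly)"
  by (simp add: pcompose_pCons)

lemma pcompose_power_left: "pcompose (p ^ k) u = (pcompose p u :: 'a::comm_ring_1 poly) ^ k"
  by (induction k) (simp_all add: pcompose_mult pcompose_1)

lemma pcompose_dvd_mono:
  fixes g h u :: "'a::comm_ring_1 poly"
  assumes "g dvd h"
  shows "pcompose g u dvd pcompose h u"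
  using assms by (auto simp: pcompose_mult elim!: dvdE)

lemma cong_pcompose:
  fixes g :: "'a::field poly"
  assumes "[a = b] (mod P)"
  shows "[pcompose g a = pcompose g b] (mod P)"
  by (induction g rule: pCons_induct) (simp_all add: pcompose_pCons cong_add cong_mult assms)

lemma dvd_pcompose_mod_iff:
  fixes f g u :: "'a::field poly"
  shows "f dvd pcompose g (u mod f) \<longleftrightarrow> f dvd pcompose g u"
  using cong_pcompose[of "u mod f" u f g] by (simp add: cong_dvd_iff)

(* Frobenius on F[X]: g^(q^j) = g(X^(q^j)), since q-th powers are additive and fix
   the coefficients. *)
lemma frobenius_pcompose:
  fixes g :: "'a::{finite,field} poly"
  shows "g ^ (CARD('a) ^ j) = pcompose g (pX ^ (CARD('a) ^ j))"
proof (induction g rule: pCons_induct)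
  case (pCons c g)
  have "[:c:] ^ (CARD('a) ^ j) = [:c:]"
    by (simp add: poly_const_pow finite_field_power_card_power)
  moreover have "pCons c g = [:c:] + pX * g" by simp
  ultimately show ?case
    by (simp only: frobenius_add power_mult_distrib pCons.IH) (simp add: pcompose_pCons)
qed (simp add: power_0_left)

(* A polynomial with coefficients in F[X] has at most as many pairwise incongruent roots
   modulo a prime P as its degree (provided P does not divide its leading coefficient):
   divide out one root at a time. *)
lemma card_roots_mod_prime_le_degree:
  fixes G :: "'a::field poly poly" and P :: "'a poly"
  assumes P: "prime_elem P" and lc: "\<not> P dvd lead_coeff G" and "finite S"
    and incongruent: "\<And>h h'. h \<in> S \<Longrightarrow> h' \<in> S \<Longrightarrow> P dvd h - h' \<Longrightarrow> h = h'"
    and roots: "\<And>h. h \<in> S \<Longrightarrow> P dvd poly G h"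
  shows "card S \<le> degree G"
  using \<open>finite S\<close> lc incongruent roots
proof (induction S arbitrary: G rule: finite_induct)
  case (insert h0 S)
  define G1 where "G1 = synthetic_div G h0"
  have G_pos: "degree G > 0"
  proof (rule ccontr)
    assume "\<not> degree G > 0"
    hence "poly G h0 = lead_coeff G" by (auto elim: degree_eq_zeroE)
    thus False using insert.prems(1) insert.prems(3)[of h0] by simp
  qed
  have "coeff (G + smult h0 G1) (degree G) = coeff (pCons (poly G h0) G1) (degree G)"
    unfolding G1_def synthetic_div_correct ..
  hence lc1: "lead_coeff G1 = lead_coeff G"
    using G_pos by (cases "degree G") (simp_all add: G1_def degree_synthetic_div coeff_eq_0)
  have G: "G = [:-h0, 1:] * G1 + [:poly G h0:]"
    unfolding G1_def by (rule synthetic_div_correct'[symmetric])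
  have "card S \<le> degree G1"
  proof (rule insert.IH)
    show "\<not> P dvd lead_coeff G1" using lc1 insert.prems(1) by simp
    show "h = h'" if "h \<in> S" "h' \<in> S" "P dvd h - h'" for h h'
      using insert.prems(2) that by blast
    show "P dvd poly G1 h" if h: "h \<in> S" for h
    proof -
      have "poly G h = (h - h0) * poly G1 h + poly G h0"
        by (subst G) (simp add: algebra_simps)
      hence "P dvd (h - h0) * poly G1 h"
        using insert.prems(3)[of h] insert.prems(3)[of h0] h by (simp add: dvd_add_left_iff)
      moreover have "\<not> P dvd h - h0"
        using insert.prems(2)[of h h0] insert.hyps(2) h by auto
      ultimately show ?thesis using P by (simp add: prime_elem_dvd_mult_iff)
    qed
  qed
  thus ?case using insert.hyps G_pos by (simp add: G1_def degree_synthetic_div)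
qed simp

lemma degree_X_power_minus_X:
  assumes "N \<ge> 2"
  shows "degree (pX ^ N - pX :: 'a::idom poly) = N" and "lead_coeff (pX ^ N - pX :: 'a poly) = 1"
proof -
  have less: "degree (- pX :: 'a poly) < degree (pX ^ N :: 'a poly)"
    using assms by (simp add: degree_power_eq)
  have diff: "pX ^ N - pX = pX ^ N + (- pX :: 'a poly)" by (simp only: diff_conv_add_uminus)
  show "degree (pX ^ N - pX :: 'a poly) = N"
    unfolding diff degree_add_eq_left[OF less] by (simp add: degree_power_eq)
  have "lead_coeff (pX ^ N - pX :: 'a poly) = lead_coeff (pX ^ N :: 'a poly)"
    unfolding diff add.commute[of "pX ^ N"] by (rule lead_coeff_add_le[OF less])
  thus "lead_coeff (pX ^ N - pX :: 'a poly) = 1" by (simp add: lead_coeff_power)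
qed

(* If P is irreducible of degree d and P divides X^(q^k) - X, then d divides k: with
   r = k mod d, Fermat gives h^(q^r) = h for all q^d residues h, while Y^(q^r) - Y has
   only q^r roots unless r = 0. *)
lemma irreducible_dvd_frobenius_imp_degree_dvd:
  fixes P :: "'a::{finite,field} poly"
  assumes irr: "irreducible P" and dvd: "P dvd pX ^ (CARD('a) ^ k) - pX"
  shows "degree P dvd k"
proof (rule ccontr)
  assume not_dvd: "\<not> degree P dvd k"
  define d where "d = degree P"
  define r where "r = k mod d"
  have d: "d > 0" unfolding d_def by (rule irreducible_degree_pos[OF irr])
  have r: "0 < r" "r < d" using not_dvd d unfolding r_def d_def by (auto simp: dvd_eq_mod_eq_0)
  have fixed: "[h ^ (CARD('a) ^ r) = h] (mod P)" for h
  proof -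
    have "k = r + d * (k div d)" unfolding r_def by simp
    hence "h ^ (CARD('a) ^ k) = (h ^ (CARD('a) ^ r)) ^ (CARD('a) ^ (d * (k div d)))"
      by (metis power_add power_mult)
    also have "[\<dots> = h ^ (CARD('a) ^ r)] (mod P)"
      unfolding d_def by (rule fermat_mod_irreducible_iterate[OF irr])
    finally have "[h ^ (CARD('a) ^ r) = h ^ (CARD('a) ^ k)] (mod P)" by (rule cong_sym)
    also have "[pcompose h (pX ^ (CARD('a) ^ k)) = pcompose h pX] (mod P)"
      using dvd by (intro cong_pcompose) (simp add: cong_iff_dvd_diff)
    hence "[h ^ (CARD('a) ^ k) = h] (mod P)"
      by (simp only: frobenius_pcompose[of h k] pcompose_idR)
    finally show ?thesis .
  qed
  have N: "CARD('a) ^ r \<ge> 2" using r(1) by (rule card_power_ge_2)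
  define G :: "'a poly poly" where "G = pX ^ (CARD('a) ^ r) - pX"
  have "card {h :: 'a poly. degree h < d} \<le> degree G"
  proof (rule card_roots_mod_prime_le_degree)
    show "prime_elem P" using irr by (rule field_poly_irreducible_imp_prime)
    show "\<not> P dvd lead_coeff G"
      using irr unfolding G_def degree_X_power_minus_X(2)[OF N] by (auto simp: irreducible_def)
    show "finite {h :: 'a poly. degree h < d}" by (rule card_degree_less(2)[OF d])
    show "h = h'" if "h \<in> {h. degree h < d}" "h' \<in> {h. degree h < d}" "P dvd h - h'" for h h'
      using that dvd_degree_less_imp_zero[of P "h - h'"] degree_diff_le_max[of h h']
      unfolding d_def by auto
    show "P dvd poly G h" for h
      using fixed[of h] by (simp add: G_def cong_iff_dvd_diff)
  qed
  hence "CARD('a) ^ d \<le> CARD('a) ^ r"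
    using card_degree_less(1)[OF d, where 'a='a] degree_X_power_minus_X(1)[OF N, where 'a="'a poly"]
    by (simp add: G_def)
  moreover have "CARD('a) ^ r < CARD('a) ^ d"
    using r card_finite_field_ge_2[where 'a='a] by (intro power_strict_increasing) auto
  ultimately show False by simp
qed

(* If an irreducible P divides g(u) for an irreducible g, then deg g divides deg P:
   P divides u^(q^(deg P)) - u, so g and X^(q^(deg P)) - X cannot be coprime. *)
lemma degree_dvd_if_irreducible_factor_of_composition:
  fixes P g u :: "'a::{finite,field} poly"
  assumes P: "irreducible P" and g: "irreducible g" and dvd: "P dvd pcompose g u"
  shows "degree g dvd degree P"
proof -
  define Y where "Y = pX ^ (CARD('a) ^ degree P) - (pX :: 'a poly)"
  have P_Y: "P dvd pcompose Y u"
    using fermat_mod_irreducible[OF P, of u]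
    by (simp add: Y_def cong_iff_dvd_diff pcompose_diff pcompose_power_left pcompose_X)
  have "g dvd Y"
  proof (rule ccontr)
    assume "\<not> g dvd Y"
    then obtain s t where "s * g + t * Y = 1" using bezout_mod_irreducible[OF g] by blast
    hence "pcompose s u * pcompose g u + pcompose t u * pcompose Y u = 1"
      by (metis pcompose_1 pcompose_add pcompose_mult)
    hence "P dvd 1" using dvd P_Y by (metis dvd_add dvd_mult)
    thus False using P by (simp add: irreducible_def)
  qed
  thus ?thesis unfolding Y_def by (rule irreducible_dvd_frobenius_imp_degree_dvd[OF g])
qed

lemma lin_assoc_eq_sum:
  fixes p :: "'a::{finite,field} poly"
  assumes "degree p \<le> D"
  shows "lin_assoc p = (\<Sum>v\<le>D. monom (coeff p v) (CARD('a) ^ v))"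
  unfolding lin_assoc_def
  by (rule sum.mono_neutral_left) (use assms in \<open>auto simp: coeff_eq_0\<close>)

lemma lin_assoc_0 [simp]: "lin_assoc (0 :: 'a::{finite,field} poly) = 0"
  by (simp add: lin_assoc_def)

lemma lin_assoc_add: "lin_assoc (p + p') = lin_assoc p + lin_assoc (p' :: 'a::{finite,field} poly)"
proof -
  define D where "D = max (degree p) (degree p')"
  have "degree (p + p') \<le> D" unfolding D_def by (rule degree_add_le) auto
  thus ?thesis
    using lin_assoc_eq_sum[of p D] lin_assoc_eq_sum[of p' D] lin_assoc_eq_sum[of "p + p'" D]
    by (simp add: D_def sum.distrib[symmetric] add_monom)
qed

lemma lin_assoc_smult: "lin_assoc (smult c p) = smult c (lin_assoc (p :: 'a::{finite,field} poly))"
proof -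
  have "smult c (lin_assoc p) = [:c:] * lin_assoc p" by simp
  thus ?thesis
    using lin_assoc_eq_sum[of "smult c p" "degree p"]
    by (simp add: lin_assoc_def sum_distrib_left smult_monom)
qed

lemma lin_assoc_diff: "lin_assoc (p - p') = lin_assoc p - lin_assoc (p' :: 'a::{finite,field} poly)"
  using lin_assoc_add[of "p - p'" p'] by simp

lemma lin_assoc_const: "lin_assoc ([:c:] :: 'a::{finite,field} poly) = smult c pX"
  by (simp add: lin_assoc_def monom_altdef)

lemma lin_assoc_1: "lin_assoc (1 :: 'a::{finite,field} poly) = pX"
  using lin_assoc_const[of "1 :: 'a"] by (simp add: one_pCons)

lemma pcompose_lin_assoc:
  fixes g u :: "'a::{finite,field} poly"
  shows "pcompose (lin_assoc g) u = (\<Sum>v\<le>degree g. smult (coeff g v) (u ^ (CARD('a) ^ v)))"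
  unfolding lin_assoc_def
  by (simp add: pcompose_sum monom_altdef pcompose_smult pcompose_power_left pcompose_X)

(* L(X * g) = L(g)^q, by the Frobenius identity. *)
lemma lin_assoc_shift:
  fixes g :: "'a::{finite,field} poly"
  shows "lin_assoc (pCons 0 g) = lin_assoc g ^ CARD('a)"
proof -
  have "lin_assoc g ^ CARD('a) = pcompose (lin_assoc g) (pX ^ CARD('a))"
    using frobenius_pcompose[of "lin_assoc g" 1] by simp
  also have "\<dots> = (\<Sum>v\<le>degree g. monom (coeff g v) (CARD('a) ^ Suc v))"
    by (simp add: pcompose_lin_assoc monom_altdef power_mult[symmetric] mult.commute)
  also have "\<dots> = (\<Sum>v\<le>Suc (degree g). monom (coeff (pCons 0 g) v) (CARD('a) ^ v))"
    by (subst sum.atMost_Suc_shift) simp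
  also have "\<dots> = lin_assoc (pCons 0 g)"
    by (rule lin_assoc_eq_sum[symmetric]) (simp add: degree_pCons_le)
  finally show ?thesis by simp
qed

lemma lin_assoc_mult:
  fixes g h :: "'a::{finite,field} poly"
  shows "lin_assoc (g * h) = pcompose (lin_assoc g) (lin_assoc h)"
proof (induction g rule: pCons_induct)
  case (pCons c g)
  have "lin_assoc (pCons c g * h) = smult c (lin_assoc h) + lin_assoc (g * h) ^ CARD('a)"
    by (simp only: mult_pCons_left lin_assoc_add lin_assoc_smult lin_assoc_shift)
  also have "\<dots> = pcompose (smult c pX + lin_assoc g ^ CARD('a)) (lin_assoc h)"
    by (simp only: pCons.IH pcompose_add pcompose_smult pcompose_power_left pcompose_X)
  also have "smult c pX + lin_assoc g ^ CARD('a) = lin_assoc (pCons c g)"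
    using lin_assoc_add[of "[:c:]" "pCons 0 g"] by (simp add: lin_assoc_const lin_assoc_shift)
  finally show ?case .
qed simp

(* Since F[X] is commutative, q-associates commute under composition. *)
lemma lin_assoc_commute:
  fixes a b :: "'a::{finite,field} poly"
  shows "pcompose (lin_assoc a) (lin_assoc b) = pcompose (lin_assoc b) (lin_assoc a)"
  by (metis lin_assoc_mult mult.commute)

lemma lin_assoc_X_power_minus_1:
  "lin_assoc (pX ^ k - 1) = pX ^ (CARD('a) ^ k) - (pX :: 'a::{finite,field} poly)"
proof -
  have "lin_assoc (pX ^ k) = (pX :: 'a poly) ^ (CARD('a) ^ k)"
    by (induction k) (simp_all add: lin_assoc_1 lin_assoc_shift power_mult[symmetric] mult.commute)
  thus ?thesis by (simp add: lin_assoc_diff lin_assoc_1)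
qed

lemma lin_assoc_frobenius_commute:
  fixes p :: "'a::{finite,field} poly"
  shows "pcompose (pX ^ (CARD('a) ^ k) - pX) (lin_assoc p)
         = pcompose (lin_assoc p) (pX ^ (CARD('a) ^ k) - pX)"
  using lin_assoc_commute[of "pX ^ k - 1" p] by (simp add: lin_assoc_X_power_minus_1)

(* Every monomial of L(g)(u) is a power of u, so u divides L(g)(u). *)
lemma dvd_pcompose_lin_assoc:
  fixes g u :: "'a::{finite,field} poly"
  assumes "P dvd u"
  shows "P dvd pcompose (lin_assoc g) u"
proof -
  have "u dvd u ^ (CARD('a) ^ v)" for v by (simp add: dvd_power)
  hence "u dvd pcompose (lin_assoc g) u"
    unfolding pcompose_lin_assoc by (intro dvd_sum dvd_smult)
  thus ?thesis using assms by (rule dvd_trans[rotated])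
qed

(* Kernel lemma.  From s*a + t*(X^k - 1) = 1 we get y = L(s)(L(a)(y)) + L(t)(y^(q^k) - y),
   so a common "zero" of L(a) and of Y^(q^k) - Y is zero. *)
lemma lin_assoc_kernel:
  fixes a y :: "'a::{finite,field} poly"
  assumes a: "irreducible a" "\<not> a dvd pX ^ k - 1"
    and dvd: "Q dvd pcompose (lin_assoc a) y" and fixed: "[y ^ (CARD('a) ^ k) = y] (mod Q)"
  shows "Q dvd y"
proof -
  obtain s t where st: "s * a + t * (pX ^ k - 1) = 1" using bezout_mod_irreducible[OF a] by blast
  have "y = pcompose (lin_assoc (s * a + t * (pX ^ k - 1))) y"
    by (simp add: st lin_assoc_1 pcompose_X)
  also have "\<dots> = pcompose (lin_assoc s) (pcompose (lin_assoc a) y)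
                   + pcompose (lin_assoc t) (y ^ (CARD('a) ^ k) - y)"
    by (simp add: lin_assoc_add lin_assoc_mult lin_assoc_X_power_minus_1 pcompose_add
                  pcompose_diff pcompose_power_left pcompose_X flip: pcompose_assoc)
  finally have y: "y = \<dots>" .
  have "Q dvd pcompose (lin_assoc s) (pcompose (lin_assoc a) y)"
    by (rule dvd_pcompose_lin_assoc[OF dvd])
  moreover have "Q dvd pcompose (lin_assoc t) (y ^ (CARD('a) ^ k) - y)"
    using fixed by (intro dvd_pcompose_lin_assoc) (simp add: cong_iff_dvd_diff)
  ultimately show ?thesis using y by (metis dvd_add)
qed

lemma degree_lin_assoc:
  fixes p :: "'a::{finite,field} poly"
  assumes "lead_coeff p = 1"
  shows "degree (lin_assoc p) = CARD('a) ^ degree p"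
proof -
  have mono: "CARD('a) ^ v \<le> CARD('a) ^ degree p" if "v \<le> degree p" for v
    using that card_finite_field_ge_2[where 'a='a] by (intro power_increasing) auto
  have "degree (lin_assoc p) \<le> CARD('a) ^ degree p"
    unfolding lin_assoc_def by (intro degree_sum_le) (auto intro: order.trans[OF degree_monom_le] mono)
  moreover have "coeff (lin_assoc p) (CARD('a) ^ degree p) = 1"
  proof -
    have "coeff (lin_assoc p) (CARD('a) ^ degree p)
          = (\<Sum>v\<le>degree p. if v = degree p then coeff p v else 0)"
      unfolding lin_assoc_def coeff_sum coeff_monom
      using card_finite_field_ge_2[where 'a='a] by (intro sum.cong refl) (auto simp: power_inject_exp)
    thus ?thesis using assms by simp
  qed
  hence "CARD('a) ^ degree p \<le> degree (lin_assoc p)" by (intro le_degree) simp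
  ultimately show ?thesis by simp
qed

(* The derivative of L(p) is the constant p(0), because q = 0 in F. *)
lemma pderiv_lin_assoc:
  fixes p :: "'a::{finite,field} poly"
  shows "pderiv (lin_assoc p) = [:coeff p 0:]"
proof -
  have "pderiv (monom (coeff p v) (CARD('a) ^ v)) = (if v = 0 then [:coeff p 0:] else 0)" for v
    by (cases v) (simp_all add: pderiv_monom monom_0 of_nat_card_eq_0)
  thus ?thesis
    unfolding lin_assoc_def by (simp add: higher_pderiv_sum[of 1, simplified])
qed

(* (X^(q^k) - X)(L(p)) is squarefree when p(0) <> 0: its derivative is the nonzero
   constant -p(0). *)
lemma frobenius_composition_squarefree:
  fixes p P :: "'a::{finite,field} poly"
  assumes c0: "coeff p 0 \<noteq> 0" and k: "k > 0"
    and sq: "P * P dvd pcompose (pX ^ (CARD('a) ^ k) - pX) (lin_assoc p)"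
  shows "is_unit P"
proof -
  define T where "T = pcompose (pX ^ (CARD('a) ^ k) - pX) (lin_assoc p)"
  have "of_nat (CARD('a) ^ k) = (0 :: 'a)" using k by (simp add: of_nat_power of_nat_card_eq_0)
  hence "pderiv T = [:- coeff p 0:]"
    using k by (simp add: T_def pcompose_diff pcompose_power_left pcompose_X pderiv_diff pderiv_power
                          pderiv_lin_assoc power_0_left)
  moreover obtain c where "T = P * P * c" using sq unfolding T_def by (elim dvdE)
  hence "P dvd pderiv T" by (simp add: pderiv_mult mult.assoc)
  ultimately have "P dvd [:- coeff p 0:]" by simp
  moreover have "is_unit [:- coeff p 0:]" using c0 by (simp add: is_unit_const_poly_iff dvd_field_iff)
  ultimately show ?thesis by (rule dvd_unit_imp_unit)
qed

(* The annihilators of u modulo f are exactly the multiples of psi (divide by psi and use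
   minimality on the remainder). *)
lemma minimal_annihilator_dvd_iff:
  fixes f psi u g :: "'a::field poly"
  assumes ann: "f dvd pcompose psi u" and psi: "psi \<noteq> 0"
    and minimal: "\<And>g. g \<noteq> 0 \<Longrightarrow> f dvd pcompose g u \<Longrightarrow> degree psi \<le> degree g"
  shows "f dvd pcompose g u \<longleftrightarrow> psi dvd g"
proof
  assume g: "f dvd pcompose g u"
  define r where "r = g mod psi"
  have "pcompose g u = pcompose (g div psi) u * pcompose psi u + pcompose r u"
    unfolding r_def by (metis div_mult_mod_eq pcompose_add pcompose_mult)
  hence "f dvd pcompose r u" using g ann by (metis dvd_add_right_iff dvd_mult)
  moreover have "degree r < degree psi" if "r \<noteq> 0"
    using degree_mod_less'[OF psi] that unfolding r_def .
  ultimately have "r = 0" using minimal by (meson leD)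
  thus "psi dvd g" unfolding r_def by (simp add: mod_eq_0_iff_dvd)
next
  assume "psi dvd g"
  then obtain c where "g = psi * c" by (elim dvdE)
  thus "f dvd pcompose g u" using ann by (simp add: pcompose_mult)
qed

(* If f is prime, so is the minimal annihilator: f | a(u) b(u) forces f | a(u) or f | b(u). *)
lemma annihilator_prime_elem:
  fixes f psi u :: "'a::field poly"
  assumes f: "prime_elem f" and psi: "psi \<noteq> 0"
    and ann: "\<And>g. f dvd pcompose g u \<longleftrightarrow> psi dvd g"
  shows "prime_elem psi"
proof (rule prime_elemI)
  show "\<not> is_unit psi"
    using ann[of 1] f by (auto simp: pcompose_1 prime_elem_not_unit)
  show "psi dvd a \<or> psi dvd b" if "psi dvd a * b" for a b
    using that ann[of "a * b"] ann[of a] ann[of b] f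
    by (simp add: pcompose_mult prime_elem_dvd_mult_iff)
qed (fact psi)

lemma irreducible_factor_exists:
  fixes A :: "'a::field poly"
  assumes "A \<noteq> 0" "\<not> is_unit A"
  shows "\<exists>P. P dvd A \<and> irreducible P"
  using assms
proof (induction "degree A" arbitrary: A rule: less_induct)
  case (less A)
  show ?case
  proof (cases "irreducible A")
    case False
    then obtain a b where ab: "A = a * b" "\<not> is_unit a" "\<not> is_unit b"
      using less.prems by (auto simp: irreducible_def)
    hence "a \<noteq> 0" "b \<noteq> 0" using less.prems(1) by auto
    hence "degree a < degree A" using ab by (simp add: degree_mult_eq is_unit_iff_degree)
    then obtain P where "P dvd a" "irreducible P" using less.hyps \<open>a \<noteq> 0\<close> ab(2) by blast
    thus ?thesis using ab(1) by (meson dvd_mult2)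
  qed (intro exI[of _ A], simp)
qed

lemma irreducible_if_factors_of_full_degree:
  fixes F :: "'a::field poly"
  assumes deg: "degree F > 0"
    and factors: "\<And>P. irreducible P \<Longrightarrow> P dvd F \<Longrightarrow> degree F \<le> degree P"
  shows "irreducible F"
proof (rule irreducibleI)
  show F: "F \<noteq> 0" using deg by auto
  show "\<not> is_unit F" using deg by (simp add: is_unit_iff_degree[OF F])
  fix A B assume AB: "F = A * B"
  hence A: "A \<noteq> 0" and B: "B \<noteq> 0" using F by auto
  show "is_unit A \<or> is_unit B"
  proof (rule disjCI)
    assume "\<not> is_unit B"
    then obtain P where P: "P dvd B" "irreducible P" using irreducible_factor_exists[OF B] by blast
    hence "degree F \<le> degree P" using AB by (intro factors) auto
    also have "degree P \<le> degree B" using P(1) B by (rule dvd_imp_degree_le)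
    finally have "degree A = 0" using AB A B by (simp add: degree_mult_eq)
    thus "is_unit A" using A by (simp add: is_unit_iff_degree)
  qed
qed

lemma primitive_poly_degree_pos: "primitive_poly m p \<Longrightarrow> m > 0"
  using irreducible_degree_pos[of p] by (auto simp: primitive_poly_def)

lemma primitive_poly_order:
  fixes p :: "'a::{finite,field} poly"
  assumes prim: "primitive_poly m p" and dvd: "p dvd pX ^ k - 1"
  shows "(CARD('a) ^ m - 1) dvd k"
proof -
  define N where "N = CARD('a) ^ m - 1"
  have N: "N > 0"
    unfolding N_def using card_power_ge_2[OF primitive_poly_degree_pos[OF prim], where 'a='a] by simp
  have "[pX ^ N = 1] (mod p)" using prim by (simp add: primitive_poly_def N_def cong_iff_dvd_diff)
  hence "[pX ^ (k mod N) * (pX ^ N) ^ (k div N) = pX ^ (k mod N) * 1] (mod p)"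
    by (intro cong_scalar_left) (metis cong_pow power_one)
  hence "[pX ^ k = pX ^ (k mod N)] (mod p)"
    by (simp flip: power_mult power_add add: mult.commute[of N])
  hence "p dvd pX ^ (k mod N) - 1"
    using dvd by (metis cong_iff_dvd_diff cong_trans cong_sym)
  hence "k mod N = 0" using prim N by (auto simp: primitive_poly_def N_def)
  thus ?thesis by (simp add: N_def dvd_eq_mod_eq_0)
qed

(* A primitive polynomial is not divisible by X, as it divides X^(q^m - 1) - 1. *)
lemma primitive_poly_coeff_0:
  fixes p :: "'a::{finite,field} poly"
  assumes prim: "primitive_poly m p"
  shows "coeff p 0 \<noteq> 0"
proof
  assume "coeff p 0 = 0"
  hence "pX dvd p" by (simp add: poly_eq_0_iff_dvd poly_0_coeff_0 flip: poly_0_coeff_0)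
  also have "p dvd pX ^ (CARD('a) ^ m - 1) - 1" using prim by (simp add: primitive_poly_def)
  finally have "pX dvd pX ^ (CARD('a) ^ m - 1) - (1 :: 'a poly)" .
  moreover have "CARD('a) ^ m - 1 > 0"
    using card_power_ge_2[OF primitive_poly_degree_pos[OF prim], where 'a='a] by simp
  ultimately show False by (simp add: dvd_iff_poly_eq_0 power_0_left)
qed

(* If gcd(n, q^m - 1) = 1 and p <> X - 1, then p does not divide X^n - 1: otherwise
   q^m - 1 = 1, and the monic p of positive degree would divide, hence equal, X - 1. *)
lemma primitive_poly_not_dvd:
  fixes p :: "'a::{finite,field} poly"
  assumes prim: "primitive_poly m p" and not_linear: "p \<noteq> [:-1, 1:]"
    and coprime: "coprime n (CARD('a) ^ m - 1)"
  shows "\<not> p dvd pX ^ n - 1"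
proof
  assume "p dvd pX ^ n - 1"
  hence "CARD('a) ^ m - 1 dvd n" by (rule primitive_poly_order[OF prim])
  hence "CARD('a) ^ m - 1 = 1" using coprime by (metis coprime_common_divisor_nat dvd_refl)
  hence "p dvd [:-1, 1:]" using prim by (simp add: primitive_poly_def one_pCons)
  then obtain c where c: "[:-1, 1:] = p * c" by (elim dvdE)
  have "degree p > 0" using prim irreducible_degree_pos by (auto simp: primitive_poly_def)
  moreover have "c \<noteq> 0" "p \<noteq> 0" using c by auto
  ultimately have "degree c = 0" using arg_cong[OF c, of degree] by (simp add: degree_mult_eq)
  moreover have "lead_coeff p = 1" using prim unfolding primitive_poly_def by blast
  hence "lead_coeff c = 1" using arg_cong[OF c, of lead_coeff] by (simp add: lead_coeff_mult)
  ultimately have "c = 1" by (metis degree_0_id one_pCons)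
  thus False using c not_linear by simp
qed

locale linearized_annihilator =
  fixes lbar f psi :: "'a::{finite,field} poly" and n :: nat
  assumes lbar_irreducible: "irreducible lbar"
    and lbar_not_dvd: "\<not> lbar dvd pX ^ n - 1"
    and f_irreducible: "irreducible f"
    and degree_f: "degree f = n"
    and psi_nonzero: "psi \<noteq> 0"
    and annihilator: "\<And>g. f dvd pcompose g (lin_assoc lbar) \<longleftrightarrow> psi dvd g"
begin

abbreviation L :: "'a poly" where "L \<equiv> lin_assoc lbar"

lemma f_dvd_psi_l: "f dvd pcompose psi L"
  using annihilator[of psi] by simp

(* psi is irreducible, as the minimal annihilator modulo the prime f. *)
lemma psi_irreducible: "irreducible psi"
proof (rule prime_elem_imp_irreducible)
  show "prime_elem psi"
    using field_poly_irreducible_imp_prime[OF f_irreducible] psi_nonzero annihilator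
    by (rule annihilator_prime_elem)
qed

lemma fermat_mod_f: "[h ^ (CARD('a) ^ n) = h] (mod f)"
  using fermat_mod_irreducible[OF f_irreducible] by (simp add: degree_f)

(* f divides X^(q^n) - X, hence also l(X^(q^n) - X) = (X^(q^n) - X)(l); so psi divides
   X^(q^n) - X. *)
lemma psi_dvd_frobenius: "psi dvd pX ^ (CARD('a) ^ n) - pX"
proof -
  have "f dvd pX ^ (CARD('a) ^ n) - pX" using fermat_mod_f[of pX] by (simp add: cong_iff_dvd_diff)
  hence "f dvd pcompose (pX ^ (CARD('a) ^ n) - pX) L"
    unfolding lin_assoc_frobenius_commute by (rule dvd_pcompose_lin_assoc)
  thus ?thesis by (simp add: annihilator)
qed

(* deg psi divides n since f | psi(l).  Conversely, with e = deg psi, psi | X^(q^e) - X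
   gives f | l(X^(q^e) - X), and the kernel lemma yields f | X^(q^e) - X, so n | e. *)
lemma degree_psi: "degree psi = n"
proof (rule dvd_antisym)
  show "degree psi dvd n"
    using degree_dvd_if_irreducible_factor_of_composition[OF f_irreducible psi_irreducible f_dvd_psi_l]
    by (simp add: degree_f)
  define Y where "Y = pX ^ (CARD('a) ^ degree psi) - (pX :: 'a poly)"
  have "psi dvd Y"
    using fermat_mod_irreducible[OF psi_irreducible, of pX] by (simp add: Y_def cong_iff_dvd_diff)
  hence "f dvd pcompose L Y"
    using annihilator[of Y] by (simp add: Y_def lin_assoc_frobenius_commute)
  hence "f dvd Y" by (rule lin_assoc_kernel[OF lbar_irreducible lbar_not_dvd _ fermat_mod_f])
  thus "n dvd degree psi"
    using irreducible_dvd_frobenius_imp_degree_dvd[OF f_irreducible] by (simp add: Y_def degree_f)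
qed

(* On the roots of X^(q^n) - X, l is inverted by M = L(s), where s*lbar + t*(X^n - 1) = 1.
   Hence f | f(M(l)) gives psi | f(M), so a common factor P of psi(l) and X^(q^n) - X
   divides f(M(l)) = f (mod P). *)
lemma factor_dvd_f:
  assumes P: "P dvd pcompose psi L" and P_frob: "P dvd pX ^ (CARD('a) ^ n) - pX"
  shows "P dvd f"
proof -
  obtain s t where st: "s * lbar + t * (pX ^ n - 1) = 1"
    using bezout_mod_irreducible[OF lbar_irreducible lbar_not_dvd] by blast
  define M where "M = lin_assoc s"
  define Y where "Y = pX ^ (CARD('a) ^ n) - (pX :: 'a poly)"
  have inverse: "[pcompose M L = pX] (mod Q)" if Q: "Q dvd Y" for Q
  proof -
    have "pcompose M L + pcompose (lin_assoc t) Y = pX"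
      using arg_cong[OF st, of lin_assoc]
      by (simp add: M_def Y_def lin_assoc_add lin_assoc_mult lin_assoc_1 lin_assoc_X_power_minus_1)
    moreover have "Q dvd pcompose (lin_assoc t) Y" by (rule dvd_pcompose_lin_assoc[OF Q])
    ultimately show ?thesis by (metis cong_add_lcancel_0 cong_0_iff add_0_right cong_sym)
  qed
  have "[pcompose f (pcompose M L) = f] (mod f)"
    using cong_pcompose[OF inverse, of f f] fermat_mod_f[of pX] by (simp add: Y_def cong_iff_dvd_diff)
  hence "f dvd pcompose (pcompose f M) L" by (simp add: cong_dvd_iff pcompose_assoc)
  hence "psi dvd pcompose f M" by (simp only: annihilator)
  hence "pcompose psi L dvd pcompose (pcompose f M) L" by (rule pcompose_dvd_mono)
  hence "P dvd pcompose f (pcompose M L)" using P by (simp add: pcompose_assoc dvd_trans)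
  moreover have "[pcompose f (pcompose M L) = f] (mod P)"
    using cong_pcompose[OF inverse] P_frob by (simp add: Y_def)
  ultimately show ?thesis by (simp add: cong_dvd_iff)
qed

(* An irreducible factor P of psi(l) not dividing X^(q^n) - X forces lbar | X^(deg P) - 1:
   otherwise the kernel lemma applied to y = X^(q^n) - X would give P | y. *)
lemma factor_order:
  assumes P: "irreducible P" "P dvd pcompose psi L"
    and P_frob: "\<not> P dvd pX ^ (CARD('a) ^ n) - pX"
  shows "lbar dvd pX ^ degree P - 1"
proof (rule ccontr)
  assume not_dvd: "\<not> lbar dvd pX ^ degree P - 1"
  have "pcompose psi L dvd pcompose (pX ^ (CARD('a) ^ n) - pX) L"
    by (rule pcompose_dvd_mono[OF psi_dvd_frobenius])
  hence "P dvd pcompose L (pX ^ (CARD('a) ^ n) - pX)"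
    using P(2) by (simp add: lin_assoc_frobenius_commute dvd_trans)
  hence "P dvd pX ^ (CARD('a) ^ n) - pX"
    by (rule lin_assoc_kernel[OF lbar_irreducible not_dvd _ fermat_mod_irreducible[OF P(1)]])
  thus False using P_frob by contradiction
qed

lemma irreducible_factor_degree:
  assumes order: "\<And>k. lbar dvd pX ^ k - 1 \<Longrightarrow> N dvd k" and coprime: "coprime n N"
    and P: "irreducible P" "P dvd pcompose psi L" and not_f: "\<not> f dvd P"
  shows "n * N dvd degree P"
proof (rule divides_mult[OF _ _ coprime])
  show "n dvd degree P"
    using degree_dvd_if_irreducible_factor_of_composition[OF P(1) psi_irreducible P(2)]
    by (simp add: degree_psi)
  have "\<not> P dvd pX ^ (CARD('a) ^ n) - pX"
    using factor_dvd_f[OF P(2)] not_f P(1) f_irreducible by (metis irreducibleD' irreducible_not_unit)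
  thus "N dvd degree P" using order factor_order[OF P] by blast
qed

(* f occurs only once in psi(l), since psi(l) divides the squarefree (X^(q^n) - X)(l). *)
lemma f_square_not_dvd:
  assumes "coeff lbar 0 \<noteq> 0" "n > 0"
  shows "\<not> f * f dvd pcompose psi L"
proof
  assume "f * f dvd pcompose psi L"
  moreover have "pcompose psi L dvd pcompose (pX ^ (CARD('a) ^ n) - pX) L"
    by (rule pcompose_dvd_mono[OF psi_dvd_frobenius])
  ultimately have "is_unit f"
    using frobenius_composition_squarefree[OF assms] dvd_trans by blast
  thus False using f_irreducible by (simp add: irreducible_def)
qed

lemma degree_quotient:
  assumes "lead_coeff lbar = 1"
  shows "degree (pcompose psi L div f) = n * (CARD('a) ^ degree lbar - 1)"
proof -
  obtain F where F: "pcompose psi L = f * F" using f_dvd_psi_l by (elim dvdE)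
  have deg: "degree (pcompose psi L) = n * CARD('a) ^ degree lbar"
    by (simp add: degree_pcompose degree_psi degree_lin_assoc[OF assms])
  have "n > 0" using irreducible_degree_pos[OF f_irreducible] by (simp add: degree_f)
  hence "F \<noteq> 0" using F deg by auto
  moreover have f: "f \<noteq> 0" using f_irreducible by auto
  ultimately have "degree F = n * (CARD('a) ^ degree lbar - 1)"
    using F deg by (simp add: degree_mult_eq degree_f diff_mult_distrib2)
  thus ?thesis using F f by simp
qed

lemma quotient_irreducible:
  assumes lbar_order: "\<And>k. lbar dvd pX ^ k - 1 \<Longrightarrow> N dvd k" and coprime: "coprime n N"
    and c0: "coeff lbar 0 \<noteq> 0" and degree: "degree (pcompose psi L div f) = n * N" and N: "N > 0"
  shows "irreducible (pcompose psi L div f)"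
proof (rule irreducible_if_factors_of_full_degree)
  have n: "n > 0" using irreducible_degree_pos[OF f_irreducible] by (simp add: degree_f)
  thus "degree (pcompose psi L div f) > 0" using degree N by simp
  have F: "pcompose psi L = f * (pcompose psi L div f)" using f_dvd_psi_l by simp
  fix P assume P: "irreducible P" "P dvd pcompose psi L div f"
  have P_dvd: "P dvd pcompose psi L" using P(2) F by (metis dvd_mult)
  have not_f: "\<not> f dvd P"
  proof
    assume "f dvd P"
    hence "f * f dvd pcompose psi L" using P(2) F by (metis dvd_trans mult_dvd_mono dvd_refl)
    thus False using f_square_not_dvd[OF c0 n] by contradiction
  qed
  have "n * N dvd degree P"
    by (rule irreducible_factor_degree) (fact lbar_order coprime P(1) P_dvd not_f)+
  thus "degree (pcompose psi L div f) \<le> degree P"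
    using degree irreducible_degree_pos[OF P(1)] by (simp add: dvd_imp_le)
qed

end

(* Primitivity of lbar gives coprimality with
   X^n - 1, the order q^m - 1 of X modulo lbar and lbar(0) <> 0; the reduction R = l mod f
   does not change annihilators modulo f. *)
theorem mainTheorem6:
  fixes lbar f psi :: "'a::{finite,field} poly" and m n :: nat
  defines "q \<equiv> CARD('a)"
  defines "l \<equiv> lin_assoc lbar"
  defines "R \<equiv> l mod f"
  assumes "m \<ge> 1" and "n \<ge> 1"
    and "coprime n (q ^ m - 1)"
    and "primitive_poly m lbar"
    and "lbar \<noteq> [:-1, 1:]"
    and "lead_coeff f = 1" and "irreducible f" and "degree f = n"
    and "lead_coeff psi = 1"
    and "f dvd pcompose psi R"
    and "\<And>g. g \<noteq> 0 \<Longrightarrow> f dvd pcompose g R \<Longrightarrow> degree psi \<le> degree g"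
  shows "irreducible psi \<and> degree psi = n \<and>
         f dvd pcompose psi l \<and>
         irreducible (pcompose psi l div f) \<and>
         degree (pcompose psi l div f) = n * (q ^ m - 1)"
proof -
  note prim = assms(7) and coprime = assms(6)[unfolded q_def]
  have lbar: "irreducible lbar" "lead_coeff lbar = 1" "degree lbar = m"
    using prim unfolding primitive_poly_def by blast+
  have psi: "psi \<noteq> 0" using assms(12) by auto
  interpret linearized_annihilator lbar f psi n
  proof
    show "\<not> lbar dvd pX ^ n - 1" by (rule primitive_poly_not_dvd[OF prim assms(8) coprime])
    show "f dvd pcompose g (lin_assoc lbar) \<longleftrightarrow> psi dvd g" for g
      using minimal_annihilator_dvd_iff[of f psi R g] assms(13,14) psi
      by (simp add: R_def l_def dvd_pcompose_mod_iff)
  qed (use lbar(1) assms(10,11) psi in auto)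
  have "q ^ m - 1 > 0" using card_power_ge_2[of m, where 'a='a] assms(4) by (simp add: q_def)
  hence "irreducible (pcompose psi l div f)"
    using quotient_irreducible[OF primitive_poly_order[OF prim] coprime primitive_poly_coeff_0[OF prim]]
      degree_quotient[OF lbar(2)] lbar(3) by (simp add: l_def q_def)
  thus ?thesis
    using psi_irreducible degree_psi f_dvd_psi_l degree_quotient[OF lbar(2)] lbar(3)
    by (simp add: l_def q_def)
qed

end
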